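(* Let $n\ge 1$ and let $\gamma_{n,k}^S$ be the integers defined by $$\sum_{\pi\in\mathfrak{S}_n(2413,3142)}t^{\mathrm{des}(\pi)}=\sum_{k=0}^{\lfloor\frac{n-1}{2}\rfloor}\gamma_{n,k}^S\, t^k (1+t)^{n-1-2k}.$$ Then for $0\le k\le\lfloor (n-1)/2\rfloor$, $\gamma_{n,k}^S=|\mathfrak{D}\mathfrak{T}_{n,k}^{1}|$, where $$\mathfrak{D}\mathfrak{T}_{n,k}^{1} :=\{T\in\mathfrak{D}\mathfrak{T}_n : r_{o}(T)=n-1-2k \text{ and every right chain of odd length in $T$ has first node labelled }\oplus \}.$$
   Context: $\mathfrak{S}_n(2413,3142)$ is the set of permutations of $[n]$ avoiding the patterns $2413$ and $3142$; $\mathrm{des}(\pi)=\#\{i\in[n-1]:\pi_i>\pi_{i+1}\}$. (The integers $\gamma^S_{n,k}$ are uniquely determined, this polynomial being palindromic of darga $n-1$.) A binary tree is either empty or consists of a root with a left and a right subtree, both binary trees. A right chain is a maximal sequence of nodes $v_1,\dots,v_l$ with $v_1$ the root or a left child and each $v_{j+1}$ the right child of $v_j$; $l$ is its length and $v_1$ its first node. $r_o(T)$ is the number of right chains of odd length in $T$. A di-sk tree is a binary tree with nodes labelled $\oplus$ or $\ominus$ such that labels alternate along every right chain; $\mathfrak{D}\mathfrak{T}_n$ is the set of di-sk trees with $n-1$ nodes. *)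

theory Defs
  imports "HOL-Library.Tree" "HOL-Computational_Algebra.Polynomial"
begin

definition perms :: "nat \<Rightarrow> nat list set" where
  "perms n = {p. distinct p \<and> set p = {1..n}}"

definition contains_2413 :: "nat list \<Rightarrow> bool" where
  "contains_2413 p \<longleftrightarrow> (\<exists>a b c d. a < b \<and> b < c \<and> c < d \<and> d < length p \<and>
      p!c < p!a \<and> p!a < p!d \<and> p!d < p!b)"

definition contains_3142 :: "nat list \<Rightarrow> bool" where
  "contains_3142 p \<longleftrightarrow> (\<exists>a b c d. a < b \<and> b < c \<and> c < d \<and> d < length p \<and>
      p!b < p!d \<and> p!d < p!a \<and> p!a < p!c)"

definition sep_perms :: "nat \<Rightarrow> nat list set" where
  "sep_perms n = {p \<in> perms n. \<not> contains_2413 p \<and> \<not> contains_3142 p}"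

definition des :: "nat list \<Rightarrow> nat" where
  "des p = card {i. Suc i < length p \<and> p!i > p!(Suc i)}"

text \<open>Labels: True = \<oplus>, False = \<ominus>. Trees from HOL-Library.Tree;
  size t is the number of nodes.\<close>

fun chain_labels :: "'a tree \<Rightarrow> 'a list" where
  "chain_labels Leaf = []"
| "chain_labels (Node l x r) = x # chain_labels r"

text \<open>Right chains (as label lists) whose first node is a left child somewhere in t.\<close>
fun lchains :: "'a tree \<Rightarrow> 'a list list" where
  "lchains Leaf = []"
| "lchains (Node l x r) =
     (if l = Leaf then [] else [chain_labels l]) @ lchains l @ lchains r"

definition right_chains :: "'a tree \<Rightarrow> 'a list list" where
  "right_chains t = (if t = Leaf then [] else [chain_labels t]) @ lchains t"

definition alternating :: "bool list \<Rightarrow> bool" where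
  "alternating c \<longleftrightarrow> (\<forall>i. Suc i < length c \<longrightarrow> c!i \<noteq> c!(Suc i))"

definition is_disk :: "bool tree \<Rightarrow> bool" where
  "is_disk t \<longleftrightarrow> (\<forall>c \<in> set (right_chains t). alternating c)"

definition r_o :: "'a tree \<Rightarrow> nat" where
  "r_o t = length (filter (\<lambda>c. odd (length c)) (right_chains t))"

definition DT :: "nat \<Rightarrow> bool tree set" where
  "DT n = {t. size t = n - 1 \<and> is_disk t}"

definition DT1 :: "nat \<Rightarrow> nat \<Rightarrow> bool tree set" where
  "DT1 n k = {t \<in> DT n. r_o t = n - 1 - 2 * k \<and>
      (\<forall>c \<in> set (right_chains t). odd (length c) \<longrightarrow> hd c = True)}"

end

theory Submission
  imports Defs
begin

text \<open>
  Avoiding 2413 and 3142 is the same as being separable: a separable permutation of length at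
  least two is a direct sum \<open>a \<oplus> b\<close> or a skew sum \<open>a \<ominus> b\<close>, uniquely so if \<open>b\<close> is required
  not to decompose in the same way, and descents add up, with one extra descent for a skew sum.
  Di-sk trees weighted by \<open>t\<close> to the number of \<open>\<ominus>\<close> nodes satisfy the same recurrence (any left
  subtree, and a right subtree that is empty or rooted at the opposite label), so the descent
  polynomial of the separable permutations of length \<open>n\<close> is the total weight of the di-sk trees
  with \<open>n - 1\<close> nodes. An alternating right chain of odd length has one more \<open>\<ominus>\<close> when it starts
  with \<open>\<ominus>\<close> than when it starts with \<open>\<oplus>\<close>; so forcing every odd chain to start with \<open>\<oplus>\<close> and
  giving it the weight \<open>1 + t\<close> does not change the generating function, which then reads
  \<open>\<Sum>k. |DT1 n k| t^k (1 + t)^(n - 1 - 2k)\<close>. Finally, such an expansion is unique.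
\<close>

definition occurs4 :: "(nat \<Rightarrow> nat \<Rightarrow> nat \<Rightarrow> nat \<Rightarrow> bool) \<Rightarrow> nat list \<Rightarrow> bool" where
  "occurs4 P p \<longleftrightarrow> (\<exists>a b c d. a < b \<and> b < c \<and> c < d \<and> d < length p \<and> P (p!a) (p!b) (p!c) (p!d))"

lemma contains_2413_iff_occurs4:
  "contains_2413 p \<longleftrightarrow> occurs4 (\<lambda>w x y z. y < w \<and> w < z \<and> z < x) p"
  by (simp add: contains_2413_def occurs4_def)

lemma contains_3142_iff_occurs4:
  "contains_3142 p \<longleftrightarrow> occurs4 (\<lambda>w x y z. x < z \<and> z < w \<and> w < y) p"
  by (simp add: contains_3142_def occurs4_def)

lemma occurs4_append_left: "occurs4 P xs \<Longrightarrow> occurs4 P (xs @ ys)"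
  unfolding occurs4_def by (elim exE, rule_tac x=a in exI, rule_tac x=b in exI,
      rule_tac x=c in exI, rule_tac x=d in exI) (simp add: nth_append)

lemma occurs4_append_right: "occurs4 P ys \<Longrightarrow> occurs4 P (xs @ ys)"
  unfolding occurs4_def by (elim exE, rule_tac x="length xs + a" in exI, rule_tac x="length xs + b" in exI,
      rule_tac x="length xs + c" in exI, rule_tac x="length xs + d" in exI) (simp add: nth_append)

lemma occurs4_map_cong:
  assumes "\<forall>w\<in>set p. \<forall>x\<in>set p. \<forall>y\<in>set p. \<forall>z\<in>set p. P (f w) (f x) (f y) (f z) \<longleftrightarrow> Q w x y z"
  shows "occurs4 P (map f p) \<longleftrightarrow> occurs4 Q p"
proof -
  have "a < b \<and> b < c \<and> c < d \<and> d < length p \<and> P (map f p!a) (map f p!b) (map f p!c) (map f p!d) \<longleftrightarrow>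
      a < b \<and> b < c \<and> c < d \<and> d < length p \<and> Q (p!a) (p!b) (p!c) (p!d)" for a b c d
    using assms by auto
  then show ?thesis unfolding occurs4_def by simp
qed

text \<open>An occurrence straddling the boundary has its values before the boundary below those after.\<close>

lemma occurs4_append_cases:
  assumes "occurs4 P (xs @ ys)" and less: "\<forall>x\<in>set xs. \<forall>y\<in>set ys. x < y"
  shows "occurs4 P xs \<or> occurs4 P ys \<or>
    (\<exists>w x y z. P w x y z \<and>
      (w < x \<and> w < y \<and> w < z \<or> w < y \<and> w < z \<and> x < y \<and> x < z \<or> w < z \<and> x < z \<and> y < z))"
proof -
  let ?zs = "xs @ ys" and ?k = "length xs"
  obtain a b c d where abcd: "a < b" "b < c" "c < d" "d < length ?zs"
    and P: "P (?zs!a) (?zs!b) (?zs!c) (?zs!d)"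
    using assms(1) unfolding occurs4_def by blast
  have lt: "?zs!i < ?zs!j" if "i < ?k" "?k \<le> j" "j < length ?zs" for i j
    using less that by (simp add: nth_append)
  consider "d < ?k" | "?k \<le> a" | "a < ?k" "?k \<le> b" | "b < ?k" "?k \<le> c" | "c < ?k" "?k \<le> d"
    by linarith
  then show ?thesis
  proof cases
    case 1
    then have "occurs4 P xs" unfolding occurs4_def using abcd P
      by (intro exI[of _ a] exI[of _ b] exI[of _ c] exI[of _ d]) (simp add: nth_append)
    then show ?thesis by blast
  next
    case 2
    then have "occurs4 P ys" unfolding occurs4_def using abcd P
      by (intro exI[of _ "a - ?k"] exI[of _ "b - ?k"] exI[of _ "c - ?k"] exI[of _ "d - ?k"])
        (auto simp: nth_append)
    then show ?thesis by blast
  next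
    case 3
    then show ?thesis using P lt[of a b] lt[of a c] lt[of a d] abcd by fastforce
  next
    case 4
    then show ?thesis using P lt[of a c] lt[of a d] lt[of b c] lt[of b d] abcd by fastforce
  next
    case 5
    then show ?thesis using P lt[of a d] lt[of b d] lt[of c d] abcd by fastforce
  qed
qed

definition separable :: "nat list \<Rightarrow> bool" where
  "separable p \<longleftrightarrow> \<not> contains_2413 p \<and> \<not> contains_3142 p"

lemma sep_perms_eq: "sep_perms n = {p \<in> perms n. separable p}"
  by (simp add: sep_perms_def separable_def)

lemma separable_appendD: "separable (xs @ ys) \<Longrightarrow> separable xs \<and> separable ys"
  unfolding separable_def contains_2413_iff_occurs4 contains_3142_iff_occurs4
  using occurs4_append_left occurs4_append_right by blast

lemma separable_append:
  assumes "separable xs" "separable ys" "\<forall>x\<in>set xs. \<forall>y\<in>set ys. x < y"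
  shows "separable (xs @ ys)"
  using occurs4_append_cases[where P="\<lambda>w x y z. y < w \<and> w < z \<and> z < x", OF _ assms(3)]
    occurs4_append_cases[where P="\<lambda>w x y z. x < z \<and> z < w \<and> w < y", OF _ assms(3)] assms(1,2)
  unfolding separable_def contains_2413_iff_occurs4 contains_3142_iff_occurs4
  by auto

lemma separable_map_mono:
  assumes "\<forall>a\<in>set p. \<forall>b\<in>set p. f a < f b \<longleftrightarrow> a < b"
  shows "separable (map f p) \<longleftrightarrow> separable p"
  unfolding separable_def contains_2413_iff_occurs4 contains_3142_iff_occurs4
  by (intro conj_cong arg_cong[where f=Not] occurs4_map_cong) (use assms in auto)

lemma separable_map_antimono:
  assumes "\<forall>a\<in>set p. \<forall>b\<in>set p. f a < f b \<longleftrightarrow> b < a"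
  shows "separable (map f p) \<longleftrightarrow> separable p"
  unfolding separable_def contains_2413_iff_occurs4 contains_3142_iff_occurs4
  by (subst conj_commute, intro conj_cong arg_cong[where f=Not] occurs4_map_cong) (use assms in auto)

text \<open>\<open>block_split (<) s p\<close> says \<open>p = a \<oplus> b\<close> with \<open>|a| = s\<close>; \<open>block_split (>) s p\<close> says \<open>p = a \<ominus> b\<close>.\<close>

definition block_split :: "(nat \<Rightarrow> nat \<Rightarrow> bool) \<Rightarrow> nat \<Rightarrow> nat list \<Rightarrow> bool" where
  "block_split R s p \<longleftrightarrow> 0 < s \<and> s < length p \<and> (\<forall>x\<in>set (take s p). \<forall>y\<in>set (drop s p). R x y)"

definition decomposable :: "(nat \<Rightarrow> nat \<Rightarrow> bool) \<Rightarrow> nat list \<Rightarrow> bool" where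
  "decomposable R p \<longleftrightarrow> (\<exists>s. block_split R s p)"

lemma block_split_iff_nth:
  "block_split R s p \<longleftrightarrow>
    0 < s \<and> s < length p \<and> (\<forall>i j. i < s \<longrightarrow> s \<le> j \<longrightarrow> j < length p \<longrightarrow> R (p!i) (p!j))"
proof -
  have "(\<forall>x\<in>set (take s p). \<forall>y\<in>set (drop s p). R x y) \<longleftrightarrow>
      (\<forall>i j. i < s \<longrightarrow> s \<le> j \<longrightarrow> j < length p \<longrightarrow> R (p!i) (p!j))" if "s < length p"
  proof
    assume R: "\<forall>x\<in>set (take s p). \<forall>y\<in>set (drop s p). R x y"
    show "\<forall>i j. i < s \<longrightarrow> s \<le> j \<longrightarrow> j < length p \<longrightarrow> R (p!i) (p!j)"
    proof (intro allI impI)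
      fix i j assume "i < s" "s \<le> j" "j < length p"
      then have "p!i \<in> set (take s p)" "p!j \<in> set (drop s p)"
        using nth_mem[of i "take s p"] nth_mem[of "j - s" "drop s p"] that by simp_all
      then show "R (p!i) (p!j)" using R by blast
    qed
  qed (auto simp: in_set_conv_nth)
  then show ?thesis unfolding block_split_def by blast
qed

lemma block_split_map:
  assumes "\<forall>a\<in>set p. \<forall>b\<in>set p. R' (f a) (f b) \<longleftrightarrow> R a b"
  shows "block_split R' s (map f p) \<longleftrightarrow> block_split R s p"
  using assms unfolding block_split_def
  by (auto simp: take_map drop_map; meson in_set_dropD in_set_takeD)

lemma decomposable_map:
  assumes "\<forall>a\<in>set p. \<forall>b\<in>set p. R' (f a) (f b) \<longleftrightarrow> R a b"
  shows "decomposable R' (map f p) \<longleftrightarrow> decomposable R p"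
  using block_split_map[of p R' f R, OF assms] by (simp add: decomposable_def)

lemma not_decomposable_less_greater: "decomposable (<) p \<Longrightarrow> \<not> decomposable (>) p"
proof
  assume "decomposable (<) p" "decomposable (>) p"
  then obtain s t where "block_split (<) s p" "block_split (>) t p"
    unfolding decomposable_def by blast
  then have "p!0 < p!(length p - 1)" "p!0 > p!(length p - 1)"
    unfolding block_split_iff_nth by auto
  then show False by simp
qed

text \<open>A large entry followed by a small one, then \<open>q!s\<close> and \<open>x\<close>, would form a 3142.\<close>

lemma separable_snoc_no_inversion:
  assumes sep: "separable (q @ [x])" and split: "block_split (<) s q" and "i < i'" "i' < s"
  shows "\<not> (x < q!i \<and> q!i' < x)"
proof
  assume "x < q!i \<and> q!i' < x"
  moreover have "q!i < q!s" "s < length q"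
    using split assms(3,4) unfolding block_split_iff_nth by auto
  ultimately have "contains_3142 (q @ [x])"
    unfolding contains_3142_def using assms(3,4)
    by (intro exI[of _ i] exI[of _ i'] exI[of _ s] exI[of _ "length q"]) (simp add: nth_append)
  then show False using sep unfolding separable_def by blast
qed

text \<open>
  If \<open>x\<close> lies neither above the first block of \<open>q\<close> nor below all of \<open>q\<close>, the entries of the first
  block below \<open>x\<close> all precede those above \<open>x\<close>, so \<open>q @ [x]\<close> splits before the first entry
  above \<open>x\<close>.
\<close>

lemma block_split_snoc_mixed:
  assumes sep: "separable (q @ [x])" and split: "block_split (<) s q" and x: "x \<notin> set q"
    and i0: "i0 < s" "x < q!i0" and i1: "i1 < length q" "q!i1 < x"
  shows "block_split (<) (length (takeWhile (\<lambda>v. v < x) q)) (q @ [x])"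
proof -
  let ?n = "length q" and ?t = "length (takeWhile (\<lambda>v. v < x) q)"
  have s: "0 < s" "s < ?n" and low_high: "\<And>i j. i < s \<Longrightarrow> s \<le> j \<Longrightarrow> j < ?n \<Longrightarrow> q!i < q!j"
    using split unfolding block_split_iff_nth by auto
  have neq: "q!i \<noteq> x" if "i < ?n" for i using x that by auto
  have no_inversion: "\<not> (x < q!i \<and> q!i' < x)" if "i < i'" "i' < s" for i i'
    using separable_snoc_no_inversion[OF sep split that] .
  have small: "q!i < x" if "i < ?t" for i
  proof -
    have "takeWhile (\<lambda>v. v < x) q ! i \<in> set (takeWhile (\<lambda>v. v < x) q)"
      using that by (rule nth_mem)
    then show ?thesis using takeWhile_nth[of i "\<lambda>v. v < x" q] that set_takeWhileD by fastforce
  qed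
  have "?t \<le> i0"
  proof (rule ccontr)
    assume "\<not> ?t \<le> i0"
    then show False using small[of i0] i0(2) by simp
  qed
  then have t_lt: "?t < ?n" using i0 s by linarith
  then have "x < q!?t" using nth_length_takeWhile[of "\<lambda>v. v < x" q] neq[of ?t] by auto
  have large: "x < q!j" if "?t \<le> j" "j < s" for j
    using that \<open>x < q!?t\<close> no_inversion[of ?t j] neq[of j] s by (cases "?t = j") auto
  have "i1 < s"
  proof (rule ccontr)
    assume "\<not> i1 < s"
    then show False using low_high[of i0 i1] i0 i1 by simp
  qed
  then have "0 < ?t" using large[of i1] i1 by (cases ?t) auto
  show ?thesis
    unfolding block_split_iff_nth
  proof (intro conjI allI impI)
    fix i j assume ij: "i < ?t" "?t \<le> j" "j < length (q @ [x])"
    show "(q @ [x])!i < (q @ [x])!j"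
    proof (cases "j < s")
      case True then show ?thesis using ij small[of i] large[of j] t_lt by (simp add: nth_append)
    next
      case False
      then show ?thesis
        using ij small[of i] low_high[of i j] \<open>?t \<le> i0\<close> i0 by (auto simp: nth_append)
    qed
  qed (use \<open>0 < ?t\<close> t_lt in auto)
qed

lemma decomposable_snoc:
  assumes dist: "distinct (q @ [x])" and sep: "separable (q @ [x])" and dec: "decomposable (<) q"
  shows "decomposable (<) (q @ [x]) \<or> decomposable (>) (q @ [x])"
proof -
  let ?p = "q @ [x]" and ?n = "length q"
  obtain s where split: "block_split (<) s q" using dec unfolding decomposable_def by blast
  then have s: "0 < s" "s < ?n" and low_high: "\<And>i j. i < s \<Longrightarrow> s \<le> j \<Longrightarrow> j < ?n \<Longrightarrow> q!i < q!j"
    unfolding block_split_iff_nth by auto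
  have x: "x \<notin> set q" using dist by simp
  then have neq: "q!i \<noteq> x" if "i < ?n" for i using that by auto
  consider (low) "\<forall>i<s. q!i < x" | (high) "\<forall>i<?n. x < q!i"
    | (mixed) i0 i1 where "i0 < s" "x < q!i0" "i1 < ?n" "q!i1 < x"
  proof (cases "\<forall>i<s. q!i < x")
    case False
    then obtain i0 where i0: "i0 < s" "\<not> q!i0 < x" by blast
    then have "x < q!i0" using neq[of i0] s by simp
    show thesis
    proof (cases "\<forall>i<?n. x < q!i")
      case False
      then obtain i1 where "i1 < ?n" "\<not> x < q!i1" by blast
      then have "q!i1 < x" using neq[of i1] by simp
      then show thesis using that(3) i0 \<open>x < q!i0\<close> \<open>i1 < ?n\<close> by blast
    qed (use that in blast)
  qed (use that in blast)
  then show ?thesis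
  proof cases
    case low
    then have "block_split (<) s ?p"
      unfolding block_split_iff_nth using s low_high by (auto simp: nth_append)
    then show ?thesis unfolding decomposable_def by blast
  next
    case high
    then have "block_split (>) ?n ?p"
      unfolding block_split_iff_nth using s by (auto simp: nth_append)
    then show ?thesis unfolding decomposable_def by blast
  next
    case mixed
    then show ?thesis
      using block_split_snoc_mixed[OF sep split x] unfolding decomposable_def by blast
  qed
qed

lemma order_reversing_map_exists: "\<exists>f :: nat \<Rightarrow> nat. \<forall>a\<in>set p. \<forall>b\<in>set p. f a < f b \<longleftrightarrow> b < a"
proof -
  have "a < Suc (Max (set p))" if "a \<in> set p" for a
    using that by (simp add: le_imp_less_Suc)
  then show ?thesis by (intro exI[of _ "\<lambda>v. Suc (Max (set p)) - v"]) (auto intro: diff_less_mono2)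
qed

lemma separable_decomposable:
  assumes "distinct p" "separable p" "2 \<le> length p"
  shows "decomposable (<) p \<or> decomposable (>) p"
  using assms
proof (induction p rule: rev_induct)
  case (snoc x q)
  show ?case
  proof (cases "length q = 1")
    case True
    then obtain y where "q = [y]" by (cases q) auto
    moreover have "y \<noteq> x" using snoc.prems(1) \<open>q = [y]\<close> by simp
    ultimately have "block_split (<) 1 (q @ [x]) \<or> block_split (>) 1 (q @ [x])"
      unfolding block_split_def by auto
    then show ?thesis unfolding decomposable_def by blast
  next
    case False
    then have q: "distinct q" "separable q" "2 \<le> length q"
      using snoc.prems(1,3) separable_appendD[OF snoc.prems(2)] by auto
    from snoc.IH[OF q] show ?thesis
    proof
      assume "decomposable (<) q"
      then show ?thesis using decomposable_snoc[OF snoc.prems(1,2)] by blast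
    next
      assume "decomposable (>) q"
      obtain f :: "nat \<Rightarrow> nat" where f: "\<forall>a\<in>set (q @ [x]). \<forall>b\<in>set (q @ [x]). f a < f b \<longleftrightarrow> b < a"
        using order_reversing_map_exists by blast
      have "inj_on f (set (q @ [x]))"
        using f by (intro inj_onI) (metis less_irrefl linorder_neqE_nat)
      then have "distinct (map f q @ [f x])" using snoc.prems(1) by (simp add: distinct_map)
      moreover have "separable (map f q @ [f x])"
        using separable_map_antimono[OF f] snoc.prems(2) by simp
      moreover have "decomposable (<) (map f q)"
        using decomposable_map[of q "(<)" f "(>)"] f \<open>decomposable (>) q\<close> by simp
      ultimately have "decomposable (<) (map f q @ [f x]) \<or> decomposable (>) (map f q @ [f x])"
        by (rule decomposable_snoc)
      then show ?thesis
        using decomposable_map[of "q @ [x]" "(<)" f "(>)"] decomposable_map[of "q @ [x]" "(>)" f "(<)"] f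
        by auto
    qed
  qed
qed simp

lemma perms_length: "p \<in> perms n \<Longrightarrow> length p = n"
  unfolding perms_def by (metis (mono_tags) card_atLeastAtMost diff_Suc_1 distinct_card mem_Collect_eq)

lemma finite_perms: "finite (perms n)"
proof (rule finite_subset)
  show "perms n \<subseteq> {xs. set xs \<subseteq> {1..n} \<and> length xs = n}"
    using perms_length by (auto simp: perms_def)
qed (rule finite_lists_length_eq, simp)

lemma finite_sep_perms: "finite (sep_perms n)"
  using finite_perms by (simp add: sep_perms_def)

lemma lower_part_of_interval:
  assumes "A \<union> B = {1..n::nat}" and "\<forall>a\<in>A. \<forall>b\<in>B. a < b"
  shows "A = {1..card A}"
proof -
  have "finite A" using assms(1) by (metis finite_Un finite_atLeastAtMost)
  have "A \<subseteq> {1..card A}"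
  proof
    fix v assume "v \<in> A"
    have "w \<in> A" if "w \<in> {1..v}" for w
    proof -
      have "v \<in> {1..n}" using \<open>v \<in> A\<close> assms(1) by blast
      then have "w \<in> A \<union> B" using that assms(1) by auto
      moreover have "w \<notin> B" using that \<open>v \<in> A\<close> assms(2) by fastforce
      ultimately show ?thesis by blast
    qed
    then have "{1..v} \<subseteq> A" by blast
    then have "card {1..v} \<le> card A" using \<open>finite A\<close> by (rule card_mono[rotated])
    then show "v \<in> {1..card A}" using \<open>v \<in> A\<close> assms(1) by auto
  qed
  then show ?thesis by (intro card_subset_eq) simp_all
qed

lemma des_Nil [simp]: "des [] = 0"
  by (simp add: des_def)

lemma des_Cons: "des (x # xs) = (if xs \<noteq> [] \<and> hd xs < x then 1 else 0) + des xs"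
proof -
  let ?D = "\<lambda>xs. {i. Suc i < length xs \<and> xs!i > xs!(Suc i)}"
  have "?D (x # xs) = (if xs \<noteq> [] \<and> hd xs < x then {0} else {}) \<union> Suc ` ?D xs"
  proof (rule set_eqI)
    fix i show "i \<in> ?D (x # xs) \<longleftrightarrow> i \<in> (if xs \<noteq> [] \<and> hd xs < x then {0} else {}) \<union> Suc ` ?D xs"
      by (cases i) (auto simp: hd_conv_nth)
  qed
  moreover have "finite (?D xs)" by (rule finite_subset[of _ "{..<length xs}"]) auto
  ultimately show ?thesis unfolding des_def by (simp add: card_image)
qed

lemma des_append:
  "xs \<noteq> [] \<Longrightarrow> ys \<noteq> [] \<Longrightarrow> des (xs @ ys) = des xs + des ys + (if hd ys < last xs then 1 else 0)"
proof (induction xs)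
  case (Cons x xs)
  then show ?case by (cases "xs = []") (simp_all add: des_Cons)
qed simp

lemma des_map_mono:
  "\<forall>a\<in>set xs. \<forall>b\<in>set xs. f a < f b \<longleftrightarrow> a < b \<Longrightarrow> des (map f xs) = des xs"
proof (induction xs)
  case (Cons x xs)
  then show ?case by (cases xs) (auto simp: des_Cons)
qed simp

definition direct_sum :: "nat list \<Rightarrow> nat list \<Rightarrow> nat list" where
  "direct_sum a b = a @ map (\<lambda>v. v + length a) b"

definition skew_sum :: "nat list \<Rightarrow> nat list \<Rightarrow> nat list" where
  "skew_sum a b = map (\<lambda>v. v + length b) a @ b"

definition complement :: "nat \<Rightarrow> nat list \<Rightarrow> nat list" where
  "complement n p = map (\<lambda>v. Suc n - v) p"

lemma direct_sum_perms:
  assumes a: "a \<in> perms i" and b: "b \<in> perms j"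
  shows "direct_sum a b \<in> perms (i + j)"
proof -
  have "length a = i" using a by (rule perms_length)
  moreover have "{1..i} \<union> {1 + i..j + i} = {1..i + j}" by auto
  ultimately show ?thesis
    using a b by (auto simp: perms_def direct_sum_def distinct_map inj_on_def)
qed

lemma separable_direct_sum:
  assumes "a \<in> perms i" "b \<in> perms j" "separable a" "separable b"
  shows "separable (direct_sum a b)"
  unfolding direct_sum_def
proof (rule separable_append)
  show "separable (map (\<lambda>v. v + length a) b)" using assms(4) by (subst separable_map_mono) auto
  show "\<forall>x\<in>set a. \<forall>y\<in>set (map (\<lambda>v. v + length a) b). x < y"
    using assms(1,2) perms_length[OF assms(1)] by (auto simp: perms_def)
qed (rule assms(3))

lemma block_split_direct_sum:
  assumes "a \<in> perms i" "b \<in> perms j" "0 < i" "0 < j"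
  shows "block_split (<) i (direct_sum a b)"
  using assms perms_length[OF assms(1)] perms_length[OF assms(2)]
  by (auto simp: block_split_def direct_sum_def perms_def)

lemma block_split_direct_sum_shift:
  assumes split: "block_split (<) (length a) (direct_sum a b)" and "0 < t"
  shows "block_split (<) (length a + t) (direct_sum a b) \<longleftrightarrow> block_split (<) t b"
proof -
  let ?bs = "map (\<lambda>v. v + length a) b"
  have "\<forall>x\<in>set a. \<forall>y\<in>set ?bs. x < y"
    using split by (simp add: block_split_def direct_sum_def del: set_map)
  then have a_less: "\<forall>x\<in>set a. \<forall>y\<in>set (drop t ?bs). x < y"
    using set_drop_subset[of t ?bs] by blast
  have "block_split (<) (length a + t) (a @ ?bs) \<longleftrightarrow> block_split (<) t ?bs"
    using a_less \<open>0 < t\<close> unfolding block_split_def by (auto simp del: set_map)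
  also have "\<dots> \<longleftrightarrow> block_split (<) t b" by (rule block_split_map) simp
  finally show ?thesis unfolding direct_sum_def .
qed

lemma direct_sum_decomposition:
  assumes p: "p \<in> perms n" and s: "block_split (<) s p"
  shows "take s p \<in> perms s" "map (\<lambda>v. v - s) (drop s p) \<in> perms (n - s)"
    and "p = direct_sum (take s p) (map (\<lambda>v. v - s) (drop s p))"
proof -
  have dist: "distinct p" and set_p: "set p = {1..n}" and len: "length p = n"
    using p perms_length[OF p] by (auto simp: perms_def)
  have "s < n" using s len by (simp add: block_split_def)
  have union: "set (take s p) \<union> set (drop s p) = {1..n}"
    using set_p by (metis set_append append_take_drop_id)
  have "card (set (take s p)) = s" using dist \<open>s < n\<close> len by (simp add: distinct_card)
  then have take_set: "set (take s p) = {1..s}"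
    using lower_part_of_interval[OF union] s unfolding block_split_def by metis
  have "set (drop s p) = {1..n} - {1..s}"
    using union take_set set_take_disj_set_drop_if_distinct[OF dist, of s s] by auto
  also have "\<dots> = {1 + s..n - s + s}" using \<open>s < n\<close> by auto
  finally have "set (drop s p) = (\<lambda>v. v + s) ` {1..n - s}" by simp
  then have "set (map (\<lambda>v. v - s) (drop s p)) = {1..n - s}" and drop_gt: "\<forall>v\<in>set (drop s p). s < v"
    by (auto simp: image_image simp del: image_add_atLeastAtMost')
  moreover have "distinct (map (\<lambda>v. v - s) (drop s p))"
    using dist drop_gt by (auto simp: distinct_map inj_on_def)
  ultimately show "map (\<lambda>v. v - s) (drop s p) \<in> perms (n - s)" by (simp add: perms_def)
  show "take s p \<in> perms s" using take_set dist by (simp add: perms_def)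
  have "map ((\<lambda>v. v + s) \<circ> (\<lambda>v. v - s)) (drop s p) = drop s p"
    by (rule map_idI) (use drop_gt in auto)
  then show "p = direct_sum (take s p) (map (\<lambda>v. v - s) (drop s p))"
    using \<open>s < n\<close> len by (simp add: direct_sum_def)
qed

lemma block_split_le_length: "block_split R s p \<Longrightarrow> s \<le> length p"
  by (simp add: block_split_def)

lemma greatest_block_split_direct_sum:
  assumes "a \<in> perms i" "b \<in> perms j" "0 < i" "0 < j" "\<not> decomposable (<) b"
  shows "(GREATEST s. block_split (<) s (direct_sum a b)) = i"
proof (rule Greatest_equality)
  show split: "block_split (<) i (direct_sum a b)" using assms(1-4) by (rule block_split_direct_sum)
  fix s assume s: "block_split (<) s (direct_sum a b)"
  show "s \<le> i"
  proof (rule ccontr)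
    assume "\<not> s \<le> i"
    then have "block_split (<) (s - i) b"
      using block_split_direct_sum_shift[of a b "s - i"] split s perms_length[OF assms(1)] by simp
    then show False using assms(5) unfolding decomposable_def by blast
  qed
qed

lemma sep_perms_direct_sum_greatest:
  assumes "p \<in> sep_perms n" "decomposable (<) p"
  obtains s a b where "s \<in> {1..<n}" "a \<in> sep_perms s" "b \<in> sep_perms (n - s)"
    "\<not> decomposable (<) b" "p = direct_sum a b"
proof -
  have p: "p \<in> perms n" "separable p" using assms(1) by (auto simp: sep_perms_eq)
  define s where "s = (GREATEST s. block_split (<) s p)"
  have bound: "s \<le> n" if "block_split (<) s p" for s
    using block_split_le_length[OF that] perms_length[OF p(1)] by simp
  obtain s0 where "block_split (<) s0 p" using assms(2) unfolding decomposable_def by blast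
  then have s: "block_split (<) s p" unfolding s_def by (rule GreatestI_nat[OF _ bound])
  define a b where "a = take s p" and "b = map (\<lambda>v. v - s) (drop s p)"
  have ab: "a \<in> perms s" "b \<in> perms (n - s)" "p = direct_sum a b"
    using direct_sum_decomposition[OF p(1) s] unfolding a_def b_def by blast+
  have len_a: "length a = s" using ab(1) by (rule perms_length)
  have "separable (a @ map (\<lambda>v. v + s) b)" using p(2) ab(3) len_a by (simp add: direct_sum_def)
  from separable_appendD[OF this] have "separable a" "separable (map (\<lambda>v. v + s) b)" by simp_all
  then have "separable a" "separable b" using separable_map_mono[of b "\<lambda>v. v + s"] by simp_all
  moreover have "\<not> decomposable (<) b"
  proof
    assume "decomposable (<) b"
    then obtain t where t: "block_split (<) t b" unfolding decomposable_def by blast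
    then have "0 < t" by (simp add: block_split_def)
    then have "block_split (<) (s + t) p"
      using block_split_direct_sum_shift[of a b t] s t ab(3) len_a by simp
    then have "s + t \<le> s" unfolding s_def by (rule Greatest_le_nat[OF _ bound])
    then show False using \<open>0 < t\<close> by simp
  qed
  moreover have "s \<in> {1..<n}" using s perms_length[OF p(1)] by (auto simp: block_split_def)
  ultimately show ?thesis using that ab by (simp add: sep_perms_eq)
qed

lemma direct_sum_bij:
  "bij_betw (\<lambda>(i, a, b). direct_sum a b)
     (SIGMA i:{1..<n}. sep_perms i \<times> {b \<in> sep_perms (n - i). \<not> decomposable (<) b})
     {p \<in> sep_perms n. decomposable (<) p}"
  (is "bij_betw ?f ?A ?B")
proof -
  have greatest: "(GREATEST s. block_split (<) s (direct_sum a b)) = i" if "(i, a, b) \<in> ?A" for i a b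
    using that by (intro greatest_block_split_direct_sum[of _ i _ "n - i"]) (auto simp: sep_perms_eq)
  have "i = i' \<and> a = a' \<and> b = b'"
    if A: "(i, a, b) \<in> ?A" "(i', a', b') \<in> ?A" and eq: "direct_sum a b = direct_sum a' b'"
    for i a b i' a' b'
  proof -
    have "i = i'" using greatest[OF A(1)] greatest[OF A(2)] eq by simp
    moreover have "length a = i" "length a' = i'" using A by (auto simp: sep_perms_eq perms_length)
    ultimately show ?thesis using eq by (auto simp: direct_sum_def)
  qed
  then have "inj_on ?f ?A" by (intro inj_onI) auto
  moreover have "?f x \<in> ?B" if "x \<in> ?A" for x
  proof -
    obtain i a b where x: "x = (i, a, b)" by (cases x)
    then show ?thesis
      using that direct_sum_perms[of a i b "n - i"] separable_direct_sum[of a i b "n - i"]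
        block_split_direct_sum[of a i b "n - i"]
      by (auto simp: sep_perms_eq decomposable_def)
  qed
  moreover have "p \<in> ?f ` ?A" if "p \<in> ?B" for p
  proof -
    from that obtain s a b where "s \<in> {1..<n}" "a \<in> sep_perms s" "b \<in> sep_perms (n - s)"
      "\<not> decomposable (<) b" "p = direct_sum a b"
      using sep_perms_direct_sum_greatest by blast
    then show ?thesis by (intro image_eqI[of _ _ "(s, a, b)"]) auto
  qed
  ultimately show ?thesis unfolding bij_betw_def by blast
qed

lemma complement_perms:
  assumes "p \<in> perms n" shows "complement n p \<in> perms n"
proof -
  have "(\<lambda>v. Suc n - v) ` {1..n} = {1..n}"
  proof
    show "{1..n} \<subseteq> (\<lambda>v. Suc n - v) ` {1..n}"
    proof
      fix w assume "w \<in> {1..n}"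
      then show "w \<in> (\<lambda>v. Suc n - v) ` {1..n}" by (intro image_eqI[of _ _ "Suc n - w"]) auto
    qed
  qed auto
  moreover have "inj_on (\<lambda>v. Suc n - v) {1..n}" by (auto simp: inj_on_def)
  ultimately show ?thesis
    using assms by (auto simp: perms_def complement_def distinct_map intro: inj_on_subset)
qed

lemma complement_complement: "p \<in> perms n \<Longrightarrow> complement n (complement n p) = p"
  by (auto simp: complement_def perms_def intro: map_idI)

lemma separable_complement: "p \<in> perms n \<Longrightarrow> separable (complement n p) \<longleftrightarrow> separable p"
  unfolding complement_def by (rule separable_map_antimono) (auto simp: perms_def)

lemma decomposable_complement:
  assumes "p \<in> perms n"
  shows "decomposable (<) (complement n p) \<longleftrightarrow> decomposable (>) p"
    and "decomposable (>) (complement n p) \<longleftrightarrow> decomposable (<) p"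
  using assms unfolding complement_def
  by (auto intro!: decomposable_map simp: perms_def)

lemma complement_direct_sum:
  assumes "a \<in> perms i" "b \<in> perms j"
  shows "complement (i + j) (direct_sum a b) = skew_sum (complement i a) (complement j b)"
  using assms perms_length[OF assms(1)] perms_length[OF assms(2)]
  by (auto simp: complement_def direct_sum_def skew_sum_def perms_def)

lemma complement_bij:
  "bij_betw (complement n) {p \<in> sep_perms n. P (complement n p)} {p \<in> sep_perms n. P p}"
  by (rule bij_betw_byWitness[where f'="complement n"])
    (auto simp: sep_perms_eq complement_complement complement_perms separable_complement)

text \<open>Complementation exchanges \<open>\<oplus>\<close> and \<open>\<ominus>\<close>, which transports \<open>direct_sum_bij\<close>.\<close>

lemma skew_sum_bij:
  "bij_betw (\<lambda>(i, a, b). skew_sum a b)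
     (SIGMA i:{1..<n}. sep_perms i \<times> {b \<in> sep_perms (n - i). \<not> decomposable (>) b})
     {p \<in> sep_perms n. decomposable (>) p}"
proof -
  let ?A = "\<lambda>R. SIGMA i:{1..<n}. sep_perms i \<times> {b \<in> sep_perms (n - i). \<not> decomposable R b}"
  let ?c = "\<lambda>(i, a, b). (i, complement i a, complement (n - i) b)"
  have c_maps: "?c x \<in> ?A (<)" if "x \<in> ?A (>)" for x
    using that by (auto simp: sep_perms_eq complement_perms separable_complement decomposable_complement)
  have c_maps': "?c x \<in> ?A (>)" if "x \<in> ?A (<)" for x
    using that by (auto simp: sep_perms_eq complement_perms separable_complement decomposable_complement)
  have c_inv: "?c (?c x) = x" if "x \<in> ?A R" for x R
    using that by (auto simp: sep_perms_eq complement_complement)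
  have "bij_betw ?c (?A (>)) (?A (<))"
    by (rule bij_betw_byWitness[where f'="?c"]) (use c_maps c_maps' c_inv in blast)+
  moreover have "bij_betw (complement n) {p \<in> sep_perms n. decomposable (<) p} {p \<in> sep_perms n. decomposable (>) p}"
    using complement_bij[of n "decomposable (>)"]
    by (simp add: sep_perms_eq decomposable_complement cong: conj_cong)
  ultimately have "bij_betw (complement n \<circ> (\<lambda>(i, a, b). direct_sum a b) \<circ> ?c) (?A (>))
      {p \<in> sep_perms n. decomposable (>) p}"
    using direct_sum_bij by (blast intro: bij_betw_trans)
  moreover have "(complement n \<circ> (\<lambda>(i, a, b). direct_sum a b) \<circ> ?c) x = (\<lambda>(i, a, b). skew_sum a b) x"
    if "x \<in> ?A (>)" for x
  proof -
    obtain i a b where x: "x = (i, a, b)" by (cases x)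
    then have "a \<in> perms i" "b \<in> perms (n - i)" "i < n" using that by (auto simp: sep_perms_eq)
    then show ?thesis
      using complement_direct_sum[of "complement i a" i "complement (n - i) b" "n - i"] x
      by (simp add: complement_perms complement_complement)
  qed
  ultimately show ?thesis by (rule bij_betw_cong[THEN iffD1, rotated])
qed

lemma des_direct_sum:
  assumes "a \<in> perms i" "b \<in> perms j" "0 < i" "0 < j"
  shows "des (direct_sum a b) = des a + des b"
proof -
  have len: "length a = i" "length b = j" using assms(1,2) by (simp_all add: perms_length)
  then have "a \<noteq> []" "b \<noteq> []" using assms(3,4) by auto
  moreover have "last a \<le> i" "0 < hd b"
    using \<open>a \<noteq> []\<close> \<open>b \<noteq> []\<close> assms(1,2) last_in_set hd_in_set by (fastforce simp: perms_def)+
  moreover have "des (map (\<lambda>v. v + length a) b) = des b" by (rule des_map_mono) simp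
  ultimately show ?thesis using len by (simp add: direct_sum_def des_append hd_map)
qed

lemma des_skew_sum:
  assumes "a \<in> perms i" "b \<in> perms j" "0 < i" "0 < j"
  shows "des (skew_sum a b) = des a + des b + 1"
proof -
  have len: "length a = i" "length b = j" using assms(1,2) by (simp_all add: perms_length)
  then have "a \<noteq> []" "b \<noteq> []" using assms(3,4) by auto
  moreover have "0 < last a" "hd b \<le> j"
    using \<open>a \<noteq> []\<close> \<open>b \<noteq> []\<close> assms(1,2) last_in_set hd_in_set by (fastforce simp: perms_def)+
  moreover have "des (map (\<lambda>v. v + length b) a) = des a" by (rule des_map_mono) simp
  ultimately show ?thesis using len by (simp add: skew_sum_def des_append last_map)
qed

definition descent_polynomial :: "nat list set \<Rightarrow> int poly" where
  "descent_polynomial A = (\<Sum>p\<in>A. monom 1 (des p))"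

lemma descent_polynomial_bij:
  assumes bij: "bij_betw (\<lambda>(i, a, b). f a b) (SIGMA i:I. A i \<times> B i) C"
    and des: "\<And>i a b. i \<in> I \<Longrightarrow> a \<in> A i \<Longrightarrow> b \<in> B i \<Longrightarrow> des (f a b) = des a + des b + d"
    and fin: "finite I" "\<And>i. finite (A i)" "\<And>i. finite (B i)"
  shows "descent_polynomial C =
    monom 1 d * (\<Sum>i\<in>I. descent_polynomial (A i) * descent_polynomial (B i))"
proof -
  let ?S = "SIGMA i:I. A i \<times> B i"
  have "descent_polynomial C = (\<Sum>x\<in>?S. monom 1 (des ((\<lambda>(i, a, b). f a b) x)))"
    unfolding descent_polynomial_def by (rule sum.reindex_bij_betw[OF bij, symmetric])
  also have "\<dots> = (\<Sum>(i, a, b)\<in>?S. monom 1 d * (monom 1 (des a) * monom 1 (des b)))"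
    by (intro sum.cong refl) (auto simp: des mult_monom add.commute add.left_commute)
  also have "\<dots> = (\<Sum>i\<in>I. \<Sum>(a, b)\<in>A i \<times> B i. monom 1 d * (monom 1 (des a) * monom 1 (des b)))"
    by (rule sum.Sigma[symmetric]) (simp_all add: fin)
  also have "\<dots> = (\<Sum>i\<in>I. monom 1 d * (descent_polynomial (A i) * descent_polynomial (B i)))"
  proof (rule sum.cong[OF refl])
    fix i
    have "descent_polynomial (A i) * descent_polynomial (B i) =
        (\<Sum>(a, b)\<in>A i \<times> B i. monom 1 (des a) * monom 1 (des b))"
      unfolding descent_polynomial_def sum_product sum.cartesian_product ..
    then show "(\<Sum>(a, b)\<in>A i \<times> B i. monom 1 d * (monom 1 (des a) * monom 1 (des b))) =
        monom 1 d * (descent_polynomial (A i) * descent_polynomial (B i))"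
      by (simp add: sum_distrib_left case_prod_beta)
  qed
  also have "\<dots> = monom 1 d * (\<Sum>i\<in>I. descent_polynomial (A i) * descent_polynomial (B i))"
    by (simp add: sum_distrib_left)
  finally show ?thesis .
qed

lemma descent_polynomial_filter_not:
  assumes "finite A"
  shows "descent_polynomial {p \<in> A. \<not> P p} = descent_polynomial A - descent_polynomial {p \<in> A. P p}"
proof -
  have "{p \<in> A. \<not> P p} = A - {p \<in> A. P p}" by blast
  then show ?thesis unfolding descent_polynomial_def using assms by (simp add: sum_diff)
qed

lemma descent_polynomial_direct_decomposable:
  "descent_polynomial {p \<in> sep_perms n. decomposable (<) p} =
    (\<Sum>i\<in>{1..<n}. descent_polynomial (sep_perms i) *
      (descent_polynomial (sep_perms (n - i)) - descent_polynomial {b \<in> sep_perms (n - i). decomposable (<) b}))"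
proof -
  have "descent_polynomial {p \<in> sep_perms n. decomposable (<) p} = monom 1 0 *
      (\<Sum>i\<in>{1..<n}. descent_polynomial (sep_perms i) *
        descent_polynomial {b \<in> sep_perms (n - i). \<not> decomposable (<) b})"
  proof (rule descent_polynomial_bij[OF direct_sum_bij])
    fix i a b assume "i \<in> {1..<n}" "a \<in> sep_perms i" "b \<in> {b \<in> sep_perms (n - i). \<not> decomposable (<) b}"
    then show "des (direct_sum a b) = des a + des b + 0"
      using des_direct_sum[of a i b "n - i"] by (simp add: sep_perms_eq)
  qed (simp_all add: finite_sep_perms)
  then show ?thesis by (simp add: descent_polynomial_filter_not finite_sep_perms)
qed

lemma descent_polynomial_skew_decomposable:
  "descent_polynomial {p \<in> sep_perms n. decomposable (>) p} = monom 1 1 *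
    (\<Sum>i\<in>{1..<n}. descent_polynomial (sep_perms i) *
      (descent_polynomial (sep_perms (n - i)) - descent_polynomial {b \<in> sep_perms (n - i). decomposable (>) b}))"
proof -
  have "descent_polynomial {p \<in> sep_perms n. decomposable (>) p} = monom 1 1 *
      (\<Sum>i\<in>{1..<n}. descent_polynomial (sep_perms i) *
        descent_polynomial {b \<in> sep_perms (n - i). \<not> decomposable (>) b})"
  proof (rule descent_polynomial_bij[OF skew_sum_bij])
    fix i a b assume "i \<in> {1..<n}" "a \<in> sep_perms i" "b \<in> {b \<in> sep_perms (n - i). \<not> decomposable (>) b}"
    then show "des (skew_sum a b) = des a + des b + 1"
      using des_skew_sum[of a i b "n - i"] by (simp add: sep_perms_eq)
  qed (simp_all add: finite_sep_perms)
  then show ?thesis by (simp add: descent_polynomial_filter_not finite_sep_perms)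
qed

lemma descent_polynomial_sep_perms_split:
  assumes "2 \<le> n"
  shows "descent_polynomial (sep_perms n) =
    descent_polynomial {p \<in> sep_perms n. decomposable (<) p} + descent_polynomial {p \<in> sep_perms n. decomposable (>) p}"
proof -
  have "decomposable (<) p \<or> decomposable (>) p" if "p \<in> sep_perms n" for p
  proof (rule separable_decomposable)
    show "distinct p" "separable p" using that by (auto simp: sep_perms_eq perms_def)
    show "2 \<le> length p" using that assms perms_length[of p n] by (simp add: sep_perms_eq)
  qed
  then have "sep_perms n = {p \<in> sep_perms n. decomposable (<) p} \<union> {p \<in> sep_perms n. decomposable (>) p}"
    by blast
  moreover have "{p \<in> sep_perms n. decomposable (<) p} \<inter> {p \<in> sep_perms n. decomposable (>) p} = {}"
    using not_decomposable_less_greater by blast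
  ultimately show ?thesis
    unfolding descent_polynomial_def by (metis (no_types, lifting) finite_Un finite_sep_perms sum.union_disjoint)
qed

lemma sep_perms_one: "sep_perms (Suc 0) = {[1]}"
proof -
  have "p = [1]" if "p \<in> perms (Suc 0)" for p
    using that perms_length[OF that] by (cases p) (auto simp: perms_def)
  then show ?thesis by (auto simp: sep_perms_def perms_def contains_2413_def contains_3142_def)
qed

lemma trees_of_size_Suc:
  "{t :: 'a tree. size t = Suc m} =
    (\<lambda>(i, l, x, r). Node l x r) ` (SIGMA i:{..m}. {l. size l = i} \<times> UNIV \<times> {r. size r = m - i})"
proof (intro equalityI subsetI)
  fix t :: "'a tree" assume "t \<in> {t. size t = Suc m}"
  then obtain l x r where "t = Node l x r" "size l + size r = m" by (cases t) auto
  then show "t \<in> (\<lambda>(i, l, x, r). Node l x r) ` (SIGMA i:{..m}. {l. size l = i} \<times> UNIV \<times> {r. size r = m - i})"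
    by (intro image_eqI[of _ _ "(size l, l, x, r)"]) auto
qed auto

lemma finite_trees_of_size: "finite {t :: 'a :: finite tree. size t = m}"
proof (induction m rule: less_induct)
  case (less m)
  show ?case
  proof (cases m)
    case (Suc k)
    have "finite {t :: 'a tree. size t = i}" if "i \<le> k" for i using less Suc that by simp
    then have "finite (SIGMA i:{..k}. {l :: 'a tree. size l = i} \<times> (UNIV :: 'a set) \<times> {r :: 'a tree. size r = k - i})"
      by (intro finite_SigmaI finite_cartesian_product) auto
    then show ?thesis unfolding Suc trees_of_size_Suc by (rule finite_imageI)
  qed simp
qed

lemma sum_trees_of_size_Suc:
  fixes f :: "'a :: finite tree \<Rightarrow> 'b :: comm_monoid_add"
  shows "(\<Sum>t | size t = Suc m. f t) =
    (\<Sum>i\<le>m. \<Sum>l | size l = i. \<Sum>r | size r = m - i. \<Sum>x\<in>UNIV. f (Node l x r))"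
proof -
  let ?S = "SIGMA i:{..m}. {l :: 'a tree. size l = i} \<times> UNIV \<times> {r. size r = m - i}"
  have "inj_on (\<lambda>(i, l, x, r). Node l x r) ?S" by (auto simp: inj_on_def)
  then have "(\<Sum>t | size t = Suc m. f t) = (\<Sum>(i, l, x, r)\<in>?S. f (Node l x r))"
    unfolding trees_of_size_Suc by (subst sum.reindex) (auto simp: case_prod_beta)
  also have "\<dots> = (\<Sum>i\<le>m. \<Sum>(l, x, r)\<in>{l. size l = i} \<times> UNIV \<times> {r. size r = m - i}. f (Node l x r))"
    by (rule sum.Sigma[symmetric]) (auto simp: finite_trees_of_size)
  also have "\<dots> = (\<Sum>i\<le>m. \<Sum>l | size l = i. \<Sum>r | size r = m - i. \<Sum>x\<in>UNIV. f (Node l x r))"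
    by (simp add: sum.cartesian_product[symmetric] sum.swap[of _ UNIV])
  finally show ?thesis .
qed

lemma sum_trees_of_size_Leaf:
  "(\<Sum>t :: 'a tree | size t = m. of_bool (t = Leaf)) = (of_bool (m = 0) :: 'b :: semiring_1)"
proof (cases m)
  case 0
  then have "{t :: 'a tree. size t = m} = {Leaf}" by auto
  then show ?thesis using 0 by simp
qed (auto intro!: sum.neutral)

lemma lchains_Node_right_chains: "lchains (Node l x r) = right_chains l @ lchains r"
  by (simp add: right_chains_def)

lemma right_chains_Node: "right_chains (Node l x r) = (x # chain_labels r) # right_chains l @ lchains r"
  by (simp add: right_chains_def)

lemma alternating_Cons: "alternating (x # c) \<longleftrightarrow> alternating c \<and> (c = [] \<or> hd c \<noteq> x)"
proof
  assume alt: "alternating (x # c)"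
  have "c!i \<noteq> c!Suc i" if "Suc i < length c" for i
    using alt[unfolded alternating_def, rule_format, of "Suc i"] that by simp
  moreover have "c = [] \<or> hd c \<noteq> x"
    using alt[unfolded alternating_def, rule_format, of 0] by (cases c) auto
  ultimately show "alternating c \<and> (c = [] \<or> hd c \<noteq> x)" unfolding alternating_def by blast
next
  assume "alternating c \<and> (c = [] \<or> hd c \<noteq> x)"
  then show "alternating (x # c)"
    unfolding alternating_def by (auto simp: hd_conv_nth nth_Cons split: nat.split)
qed

lemma is_disk_iff: "is_disk t \<longleftrightarrow> alternating (chain_labels t) \<and> (\<forall>c\<in>set (lchains t). alternating c)"
  by (cases t) (simp_all add: is_disk_def right_chains_def alternating_def)

lemma is_disk_Leaf [simp]: "is_disk Leaf"
  by (simp add: is_disk_def right_chains_def)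

lemma is_disk_Node:
  "is_disk (Node l x r) \<longleftrightarrow> is_disk l \<and> is_disk r \<and> (chain_labels r = [] \<or> hd (chain_labels r) \<noteq> x)"
proof -
  have "is_disk (Node l x r) \<longleftrightarrow>
      alternating (x # chain_labels r) \<and> is_disk l \<and> (\<forall>c\<in>set (lchains r). alternating c)"
    unfolding is_disk_def right_chains_Node by auto
  then show ?thesis unfolding alternating_Cons is_disk_iff[of r] by blast
qed

lemma is_disk_Node_Leaf [simp]: "is_disk (Node l x Leaf) \<longleftrightarrow> is_disk l"
  by (simp add: is_disk_Node)

lemma is_disk_Node_Node [simp]:
  "is_disk (Node l x (Node l' y r')) \<longleftrightarrow> is_disk l \<and> is_disk (Node l' y r') \<and> y \<noteq> x"
  by (subst is_disk_Node) auto

definition ominus_count :: "bool tree \<Rightarrow> nat" where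
  "ominus_count t = count_list (inorder t) False"

lemma ominus_count_Leaf [simp]: "ominus_count Leaf = 0"
  by (simp add: ominus_count_def)

lemma ominus_count_Node [simp]:
  "ominus_count (Node l x r) = ominus_count l + of_bool (\<not> x) + ominus_count r"
  by (simp add: ominus_count_def)

text \<open>
  With \<open>\<omega> = (\<lambda>_. 1)\<close> the tree
  weight is \<open>t\<close> to the number of \<open>\<ominus>\<close> nodes; with \<open>\<omega> \<oplus> = 1 + t\<close>, \<open>\<omega> \<ominus> = 0\<close> it is the weight
  of the trees counted by \<open>DT1\<close>.
\<close>

definition odd_chains_weight :: "(bool \<Rightarrow> int poly) \<Rightarrow> bool list list \<Rightarrow> int poly" where
  "odd_chains_weight \<omega> cs = (\<Prod>c\<leftarrow>cs. if odd (length c) then \<omega> (hd c) else 1)"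

lemma odd_chains_weight_simps [simp]:
  "odd_chains_weight \<omega> [] = 1"
  "odd_chains_weight \<omega> (c # cs) = (if odd (length c) then \<omega> (hd c) else 1) * odd_chains_weight \<omega> cs"
  "odd_chains_weight \<omega> (cs @ ds) = odd_chains_weight \<omega> cs * odd_chains_weight \<omega> ds"
  by (simp_all add: odd_chains_weight_def)

definition tree_weight :: "(bool \<Rightarrow> int poly) \<Rightarrow> bool tree \<Rightarrow> int poly" where
  "tree_weight \<omega> t =
    (if is_disk t then monom 1 (ominus_count t) * odd_chains_weight \<omega> (right_chains t) else 0)"

text \<open>
  The weight of a tree whose root is labelled \<open>b\<close> and whose root chain has odd length iff \<open>e\<close>,
  with the factor of the root chain left out (it is only known once the chain is complete).
\<close>

definition root_chain_weight :: "(bool \<Rightarrow> int poly) \<Rightarrow> bool \<Rightarrow> bool \<Rightarrow> bool tree \<Rightarrow> int poly" where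
  "root_chain_weight \<omega> b e t = (case t of Leaf \<Rightarrow> 0 | Node _ x _ \<Rightarrow>
    if x = b \<and> odd (length (chain_labels t)) = e \<and> is_disk t
    then monom 1 (ominus_count t) * odd_chains_weight \<omega> (lchains t) else 0)"

lemma root_chain_weight_Node:
  "root_chain_weight \<omega> b e (Node l x r) =
    of_bool (x = b) * monom 1 (of_bool (\<not> b)) * tree_weight \<omega> l *
      (of_bool (r = Leaf \<and> e) + root_chain_weight \<omega> (\<not> b) (\<not> e) r)"
proof (cases r)
  case Leaf
  then show ?thesis
    by (cases b; cases x; cases e) (simp_all add: root_chain_weight_def tree_weight_def lchains_Node_right_chains mult_monom del: lchains.simps(2))
next
  case (Node l' y r')
  then show ?thesis
    by (cases b; cases x; cases y; cases e)
      (simp_all add: root_chain_weight_def tree_weight_def lchains_Node_right_chains mult_monom mult_ac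
        del: lchains.simps(2))
qed

lemma tree_weight_split:
  "tree_weight \<omega> t = of_bool (t = Leaf) + root_chain_weight \<omega> True False t + root_chain_weight \<omega> False False t
    + \<omega> True * root_chain_weight \<omega> True True t + \<omega> False * root_chain_weight \<omega> False True t"
proof (cases t)
  case (Node l x r)
  then show ?thesis
    by (cases x; cases "odd (length (chain_labels r))")
      (simp_all add: tree_weight_def root_chain_weight_def right_chains_Node lchains_Node_right_chains mult_ac
        del: lchains.simps(2))
qed (simp add: tree_weight_def right_chains_def root_chain_weight_def)

definition weight_sum :: "(bool \<Rightarrow> int poly) \<Rightarrow> nat \<Rightarrow> int poly" where
  "weight_sum \<omega> m = (\<Sum>t | size t = m. tree_weight \<omega> t)"

definition root_chain_sum :: "(bool \<Rightarrow> int poly) \<Rightarrow> bool \<Rightarrow> bool \<Rightarrow> nat \<Rightarrow> int poly" where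
  "root_chain_sum \<omega> b e m = (\<Sum>t | size t = m. root_chain_weight \<omega> b e t)"

lemma root_chain_sum_0 [simp]: "root_chain_sum \<omega> b e 0 = 0"
proof -
  have "{t :: bool tree. size t = 0} = {Leaf}" by auto
  then show ?thesis by (simp add: root_chain_sum_def root_chain_weight_def)
qed

lemma root_chain_sum_Suc:
  "root_chain_sum \<omega> b e (Suc m) = monom 1 (of_bool (\<not> b)) *
    (\<Sum>i\<le>m. weight_sum \<omega> i * (of_bool (i = m \<and> e) + root_chain_sum \<omega> (\<not> b) (\<not> e) (m - i)))"
proof -
  let ?c = "monom 1 (of_bool (\<not> b)) :: int poly"
  have node: "(\<Sum>x\<in>UNIV. root_chain_weight \<omega> b e (Node l x r)) =
      ?c * (tree_weight \<omega> l * (of_bool (r = Leaf) * of_bool e + root_chain_weight \<omega> (\<not> b) (\<not> e) r))" for l r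
    by (cases b) (simp_all add: UNIV_bool root_chain_weight_Node of_bool_conj mult_ac)
  have "root_chain_sum \<omega> b e (Suc m) = (\<Sum>i\<le>m. \<Sum>l | size l = i. \<Sum>r | size r = m - i.
      ?c * (tree_weight \<omega> l * (of_bool (r = Leaf) * of_bool e + root_chain_weight \<omega> (\<not> b) (\<not> e) r)))"
    unfolding root_chain_sum_def sum_trees_of_size_Suc node ..
  also have "\<dots> = (\<Sum>i\<le>m. ?c * (weight_sum \<omega> i *
      (of_bool (m - i = 0) * of_bool e + root_chain_sum \<omega> (\<not> b) (\<not> e) (m - i))))"
  proof (intro sum.cong refl)
    fix i
    have "(\<Sum>r | size r = m - i. ?c * (tree_weight \<omega> l *
          (of_bool (r = Leaf) * of_bool e + root_chain_weight \<omega> (\<not> b) (\<not> e) r))) =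
        ?c * (tree_weight \<omega> l * (of_bool (m - i = 0) * of_bool e + root_chain_sum \<omega> (\<not> b) (\<not> e) (m - i)))"
      for l
      by (simp only: sum_distrib_left[symmetric] sum.distrib sum_distrib_right[symmetric]
          sum_trees_of_size_Leaf root_chain_sum_def)
    then show "(\<Sum>l | size l = i. \<Sum>r | size r = m - i. ?c * (tree_weight \<omega> l *
          (of_bool (r = Leaf) * of_bool e + root_chain_weight \<omega> (\<not> b) (\<not> e) r))) =
        ?c * (weight_sum \<omega> i * (of_bool (m - i = 0) * of_bool e + root_chain_sum \<omega> (\<not> b) (\<not> e) (m - i)))"
      by (simp only: sum_distrib_left[symmetric] sum_distrib_right[symmetric] weight_sum_def)
  qed
  also have "\<dots> = ?c *
      (\<Sum>i\<le>m. weight_sum \<omega> i * (of_bool (i = m \<and> e) + root_chain_sum \<omega> (\<not> b) (\<not> e) (m - i)))"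
    unfolding sum_distrib_left by (intro sum.cong refl) auto
  finally show ?thesis .
qed

lemma weight_sum_split:
  "weight_sum \<omega> m = of_bool (m = 0) + root_chain_sum \<omega> True False m + root_chain_sum \<omega> False False m
    + \<omega> True * root_chain_sum \<omega> True True m + \<omega> False * root_chain_sum \<omega> False True m"
  unfolding weight_sum_def root_chain_sum_def tree_weight_split[of \<omega>] sum.distrib sum_distrib_left
  by (simp add: sum_trees_of_size_Leaf)

text \<open>Flipping the labels of the root chain; on odd chains this costs a factor \<open>t\<close>.\<close>

lemma root_chain_sum_flip:
  "root_chain_sum \<omega> False True m = monom 1 1 * root_chain_sum \<omega> True True m \<and>
    root_chain_sum \<omega> False False m = root_chain_sum \<omega> True False m"
proof (induction m rule: less_induct)
  case (less m)
  show ?case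
  proof (cases m)
    case (Suc k)
    have IH: "root_chain_sum \<omega> False True (k - i) = monom 1 1 * root_chain_sum \<omega> True True (k - i)"
      "root_chain_sum \<omega> False False (k - i) = root_chain_sum \<omega> True False (k - i)" for i
      using less[of "k - i"] Suc by auto
    show ?thesis
      unfolding Suc root_chain_sum_Suc by (simp add: IH sum_distrib_left mult_ac)
  qed simp
qed

lemma weight_sum_root_chain_sums:
  "weight_sum \<omega> m = of_bool (m = 0) + 2 * root_chain_sum \<omega> True False m
    + (\<omega> True + monom 1 1 * \<omega> False) * root_chain_sum \<omega> True True m"
  using root_chain_sum_flip[of \<omega> m] by (simp add: weight_sum_split algebra_simps)

lemma weight_sum_cong:
  assumes "\<omega> True + monom 1 1 * \<omega> False = \<omega>' True + monom 1 1 * \<omega>' False"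
  shows "weight_sum \<omega> m = weight_sum \<omega>' m"
proof -
  have "root_chain_sum \<omega> b e m = root_chain_sum \<omega>' b e m" for b e
  proof (induction m arbitrary: b e rule: less_induct)
    case (less m)
    show ?case
    proof (cases m)
      case (Suc k)
      have "weight_sum \<omega> i = weight_sum \<omega>' i" if "i \<le> k" for i
        using weight_sum_root_chain_sums[of \<omega> i] weight_sum_root_chain_sums[of \<omega>' i]
          less[of i] that Suc assms by simp
      moreover have "root_chain_sum \<omega> b' e' (k - i) = root_chain_sum \<omega>' b' e' (k - i)" for b' e' i
        using less[of "k - i"] Suc by simp
      ultimately show ?thesis
        unfolding Suc root_chain_sum_Suc by (intro arg_cong2[where f = "(*)"] sum.cong) auto
    qed simp
  qed
  then show ?thesis
    using weight_sum_root_chain_sums[of \<omega> m] weight_sum_root_chain_sums[of \<omega>' m] assms by simp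
qed

definition root_label_sum :: "bool \<Rightarrow> nat \<Rightarrow> int poly" where
  "root_label_sum b m = root_chain_sum (\<lambda>_. 1) b True m + root_chain_sum (\<lambda>_. 1) b False m"

lemma weight_sum_one_split:
  "weight_sum (\<lambda>_. 1) m = of_bool (m = 0) + root_label_sum True m + root_label_sum False m"
  by (simp add: weight_sum_split root_label_sum_def)

lemma root_label_sum_0 [simp]: "root_label_sum b 0 = 0"
  by (simp add: root_label_sum_def)

lemma root_label_sum_Suc:
  "root_label_sum b (Suc m) = monom 1 (of_bool (\<not> b)) *
    (\<Sum>i\<le>m. weight_sum (\<lambda>_. 1) i * (of_bool (i = m) + root_label_sum (\<not> b) (m - i)))"
  by (simp add: root_label_sum_def root_chain_sum_Suc sum.distrib distrib_left distrib_right add_ac)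

lemma additive_inorder_right_chains:
  fixes f :: "'a list \<Rightarrow> 'b :: comm_monoid_add"
  assumes add: "\<And>xs ys. f (xs @ ys) = f xs + f ys" and nil: "f [] = 0"
  shows "f (inorder t) = (\<Sum>c\<leftarrow>right_chains t. f c)"
proof (induction t)
  case (Node l x r)
  have "(\<Sum>c\<leftarrow>right_chains r. f c) = f (chain_labels r) + (\<Sum>c\<leftarrow>lchains r. f c)"
    using nil by (cases r) (simp_all add: right_chains_def)
  then show ?case
    using Node add[of "[x]" "chain_labels r"] add[of "inorder l" "x # inorder r"] add[of "[x]" "inorder r"]
    by (simp add: right_chains_Node add_ac)
qed (simp add: right_chains_def nil)

lemma size_right_chains: "size t = (\<Sum>c\<leftarrow>right_chains t. length c)"
  using additive_inorder_right_chains[of length t] by simp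

lemma ominus_count_right_chains: "ominus_count t = (\<Sum>c\<leftarrow>right_chains t. count_list c False)"
  unfolding ominus_count_def by (rule additive_inorder_right_chains) simp_all

lemma count_list_alternating:
  "alternating c \<Longrightarrow> count_list c False =
    (if c = [] then 0 else if hd c then length c div 2 else (length c + 1) div 2)"
proof (induction c)
  case (Cons x c)
  then show ?case by (cases c) (auto simp: alternating_Cons)
qed simp

lemma count_list_alternating_odd:
  assumes "alternating c" and "odd (length c) \<longrightarrow> hd c"
  shows "2 * count_list c False + of_bool (odd (length c)) = length c"
  using assms by (auto simp: count_list_alternating)

lemma ominus_count_r_o:
  assumes "is_disk t" and "\<forall>c\<in>set (right_chains t). odd (length c) \<longrightarrow> hd c"
  shows "2 * ominus_count t + r_o t = size t"
proof -
  have "2 * (\<Sum>c\<leftarrow>cs. count_list c False) + length (filter (\<lambda>c. odd (length c)) cs) = (\<Sum>c\<leftarrow>cs. length c)"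
    if "\<forall>c\<in>set cs. alternating c \<and> (odd (length c) \<longrightarrow> hd c)" for cs
    using that
  proof (induction cs)
    case (Cons c cs)
    then have "2 * count_list c False + of_bool (odd (length c)) = length c"
      by (intro count_list_alternating_odd) auto
    then show ?case using Cons by (cases "odd (length c)") auto
  qed simp
  then show ?thesis
    using assms unfolding ominus_count_right_chains size_right_chains r_o_def is_disk_def by simp
qed

lemma odd_chains_weight_positive_heads:
  "odd_chains_weight (\<lambda>b. if b then [:1, 1:] else 0) cs =
    (if \<forall>c\<in>set cs. odd (length c) \<longrightarrow> hd c then [:1, 1:] ^ length (filter (\<lambda>c. odd (length c)) cs) else 0)"
  by (induction cs) auto

lemma tree_weight_positive_heads:
  "tree_weight (\<lambda>b. if b then [:1, 1:] else 0) t =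
    (if is_disk t \<and> (\<forall>c\<in>set (right_chains t). odd (length c) \<longrightarrow> hd c)
     then monom 1 (ominus_count t) * [:1, 1:] ^ r_o t else 0)"
  by (auto simp: tree_weight_def odd_chains_weight_positive_heads r_o_def)

lemma weight_sum_DT1:
  "weight_sum (\<lambda>b. if b then [:1, 1:] else 0) (n - 1) =
    (\<Sum>k\<le>(n - 1) div 2. smult (int (card (DT1 n k))) (monom 1 k * [:1, 1:] ^ (n - 1 - 2 * k)))"
proof -
  let ?m = "n - 1" and ?\<omega> = "\<lambda>b. if b then [:1, 1:] else 0 :: int poly"
  let ?X = "\<lambda>k. monom 1 k * [:1, 1:] ^ (n - 1 - 2 * k) :: int poly"
  note weight = tree_weight_positive_heads
  have DT1_weight: "tree_weight ?\<omega> t = ?X k" if "t \<in> DT1 n k" "k \<le> ?m div 2" for t k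
  proof -
    have t: "is_disk t" "\<forall>c\<in>set (right_chains t). odd (length c) \<longrightarrow> hd c" "size t = ?m" "r_o t = ?m - 2 * k"
      using that(1) by (auto simp: DT1_def DT_def)
    then have "ominus_count t = k" using ominus_count_r_o[OF t(1,2)] that(2) by simp
    then show ?thesis using t weight by simp
  qed
  have fin: "finite (DT1 n k)" for k
    by (rule finite_subset[OF _ finite_trees_of_size[of ?m]]) (auto simp: DT1_def DT_def)
  have "(\<Sum>k\<le>?m div 2. smult (int (card (DT1 n k))) (?X k)) = (\<Sum>k\<le>?m div 2. \<Sum>t\<in>DT1 n k. tree_weight ?\<omega> t)"
    by (intro sum.cong refl) (simp add: DT1_weight of_nat_poly)
  also have "\<dots> = (\<Sum>t\<in>(\<Union>k\<le>?m div 2. DT1 n k). tree_weight ?\<omega> t)"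
    by (rule sum.UNION_disjoint[symmetric]) (simp_all add: fin, auto simp: DT1_def)
  also have "\<dots> = weight_sum ?\<omega> ?m"
    unfolding weight_sum_def
  proof (rule sum.mono_neutral_left)
    show "\<forall>t\<in>{t. size t = ?m} - (\<Union>k\<le>?m div 2. DT1 n k). tree_weight ?\<omega> t = 0"
    proof
      fix t assume t: "t \<in> {t. size t = ?m} - (\<Union>k\<le>?m div 2. DT1 n k)"
      show "tree_weight ?\<omega> t = 0"
      proof (rule ccontr)
        assume "tree_weight ?\<omega> t \<noteq> 0"
        then have good: "is_disk t" "\<forall>c\<in>set (right_chains t). odd (length c) \<longrightarrow> hd c"
          using weight by (auto split: if_splits)
        moreover have "r_o t = ?m - 2 * ominus_count t" "ominus_count t \<le> ?m div 2"
          using ominus_count_r_o[OF good] t by auto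
        ultimately have "t \<in> DT1 n (ominus_count t)" using t by (simp add: DT1_def DT_def)
        then show False using t \<open>ominus_count t \<le> ?m div 2\<close> by blast
      qed
    qed
  qed (auto simp: finite_trees_of_size DT1_def DT_def)
  finally show ?thesis by simp
qed

lemma sum_atLeast1_lessThan_Suc_Suc:
  "(\<Sum>i\<in>{1..<Suc (Suc k)}. f i) = (\<Sum>j\<le>k. f (Suc j))"
proof -
  have "{1..<Suc (Suc k)} = Suc ` {..<Suc k}"
    by (simp add: image_Suc_lessThan atLeastLessThanSuc_atLeastAtMost)
  then show ?thesis by (simp add: sum.reindex lessThan_Suc_atMost)
qed

lemma descent_polynomials_sep_perms:
  "descent_polynomial (sep_perms (Suc m)) = weight_sum (\<lambda>_. 1) m \<and>
    descent_polynomial {p \<in> sep_perms (Suc m). decomposable (<) p} = root_label_sum True m \<and>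
    descent_polynomial {p \<in> sep_perms (Suc m). decomposable (>) p} = root_label_sum False m"
proof (induction m rule: less_induct)
  case (less m)
  show ?case
  proof (cases m)
    case 0
    have "\<not> decomposable R [1]" for R by (simp add: decomposable_def block_split_def)
    then have "{p \<in> sep_perms (Suc 0). decomposable R p} = {}" for R by (simp add: sep_perms_one)
    then show ?thesis
      using 0 by (simp add: sep_perms_one descent_polynomial_def des_Cons weight_sum_one_split)
  next
    case (Suc k)
    let ?S = "\<lambda>n. descent_polynomial (sep_perms n)"
    let ?P = "\<lambda>R n. descent_polynomial {p \<in> sep_perms n. decomposable R p}"
    have IH: "?S (Suc j) = weight_sum (\<lambda>_. 1) j"
      "?S (Suc k - j) - ?P (<) (Suc k - j) = of_bool (j = k) + root_label_sum False (k - j)"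
      "?S (Suc k - j) - ?P (>) (Suc k - j) = of_bool (j = k) + root_label_sum True (k - j)"
      if "j \<le> k" for j
      using less[of j] less[of "k - j"] that Suc by (auto simp: weight_sum_one_split Suc_diff_le)
    have "?P (<) (Suc m) = (\<Sum>j\<le>k. ?S (Suc j) * (?S (Suc k - j) - ?P (<) (Suc k - j)))"
      unfolding Suc descent_polynomial_direct_decomposable[of "Suc (Suc k)"] sum_atLeast1_lessThan_Suc_Suc
      by simp
    also have "\<dots> = (\<Sum>j\<le>k. weight_sum (\<lambda>_. 1) j * (of_bool (j = k) + root_label_sum False (k - j)))"
      by (rule sum.cong) (simp_all add: IH)
    also have "\<dots> = root_label_sum True m"
      unfolding Suc root_label_sum_Suc by simp
    finally have plus: "?P (<) (Suc m) = root_label_sum True m" .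
    have "?P (>) (Suc m) = monom 1 1 * (\<Sum>j\<le>k. ?S (Suc j) * (?S (Suc k - j) - ?P (>) (Suc k - j)))"
      unfolding Suc descent_polynomial_skew_decomposable[of "Suc (Suc k)"] sum_atLeast1_lessThan_Suc_Suc
      by simp
    also have "\<dots> = monom 1 1 * (\<Sum>j\<le>k. weight_sum (\<lambda>_. 1) j * (of_bool (j = k) + root_label_sum True (k - j)))"
      by (intro arg_cong2[where f = "(*)"] sum.cong) (simp_all add: IH)
    also have "\<dots> = root_label_sum False m"
      unfolding Suc root_label_sum_Suc by simp
    finally have minus: "?P (>) (Suc m) = root_label_sum False m" .
    have "?S (Suc m) = weight_sum (\<lambda>_. 1) m"
      using descent_polynomial_sep_perms_split[of "Suc m"] plus minus Suc
      by (simp add: weight_sum_one_split)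
    with plus minus show ?thesis by blast
  qed
qed

lemma gamma_expansion_unique:
  "(\<Sum>k\<le>m div 2. smult (c k) (monom 1 k * [:1, 1:] ^ (m - 2 * k))) = (0 :: int poly) \<Longrightarrow>
    \<forall>k\<le>m div 2. c k = 0"
proof (induction m arbitrary: c rule: less_induct)
  case (less m)
  have "coeff (\<Sum>k\<le>m div 2. smult (c k) (monom 1 k * [:1, 1:] ^ (m - 2 * k))) 0 = c 0"
    by (simp add: coeff_sum coeff_monom_mult coeff_0_power sum.atMost_shift)
  then have c0: "c 0 = 0" using less.prems by simp
  show ?case
  proof (cases "m < 2")
    case False
    define m' where "m' = m - 2"
    have md: "m div 2 = Suc (m' div 2)" using False by (simp add: m'_def div_if)
    have "0 = (\<Sum>k\<le>m' div 2. smult (c (Suc k)) (monom 1 (Suc k) * [:1, 1:] ^ (m - 2 * Suc k)))"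
      using less.prems c0 unfolding md sum.atMost_Suc_shift by simp
    also have "\<dots> = monom 1 1 * (\<Sum>k\<le>m' div 2. smult (c (Suc k)) (monom 1 k * [:1, 1:] ^ (m' - 2 * k)))"
      unfolding sum_distrib_left
    proof (intro sum.cong refl)
      fix k
      have "monom (1 :: int) (Suc k) = monom 1 1 * monom 1 k" by (simp add: mult_monom)
      then show "smult (c (Suc k)) (monom 1 (Suc k) * [:1, 1:] ^ (m - 2 * Suc k)) =
          monom 1 1 * smult (c (Suc k)) (monom 1 k * [:1, 1:] ^ (m' - 2 * k))"
        by (simp add: m'_def mult.assoc)
    qed
    finally have "(\<Sum>k\<le>m' div 2. smult (c (Suc k)) (monom 1 k * [:1, 1:] ^ (m' - 2 * k))) = 0"
      by simp
    then have "\<forall>k\<le>m' div 2. c (Suc k) = 0" using less.IH[of m'] False by (simp add: m'_def)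
    then show ?thesis using c0 md by (metis Suc_le_mono not0_implies_Suc)
  qed (use c0 in auto)
qed

lemma weight_sum_one_eq_positive_heads:
  "weight_sum (\<lambda>_. 1) m = weight_sum (\<lambda>b. if b then [:1, 1:] else 0) m"
  by (rule weight_sum_cong) (simp add: monom_altdef one_pCons)

theorem theorem3p4:
  fixes n :: nat and g :: "nat \<Rightarrow> int"
  assumes "n \<ge> 1"
    and "(\<Sum>p\<in>sep_perms n. monom (1::int) (des p)) =
         (\<Sum>k\<le>(n - 1) div 2. smult (g k) (monom 1 k * [:1, 1:] ^ (n - 1 - 2 * k)))"
  shows "\<forall>k\<le>(n - 1) div 2. g k = int (card (DT1 n k))"
proof -
  have "(\<Sum>p\<in>sep_perms n. monom 1 (des p)) = weight_sum (\<lambda>_. 1) (n - 1)"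
    using descent_polynomials_sep_perms[of "n - 1"] assms(1) by (simp add: descent_polynomial_def)
  also have "\<dots> = weight_sum (\<lambda>b. if b then [:1, 1:] else 0) (n - 1)"
    by (rule weight_sum_one_eq_positive_heads)
  also have "\<dots> = (\<Sum>k\<le>(n - 1) div 2. smult (int (card (DT1 n k))) (monom 1 k * [:1, 1:] ^ (n - 1 - 2 * k)))"
    by (rule weight_sum_DT1)
  finally have "(\<Sum>p\<in>sep_perms n. monom 1 (des p)) =
      (\<Sum>k\<le>(n - 1) div 2. smult (int (card (DT1 n k))) (monom 1 k * [:1, 1:] ^ (n - 1 - 2 * k)))" .
  with assms(2) have "(\<Sum>k\<le>(n - 1) div 2.
      smult (g k - int (card (DT1 n k))) (monom 1 k * [:1, 1:] ^ (n - 1 - 2 * k))) = 0"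
    by (simp add: smult_diff_left sum_subtractf)
  then show ?thesis using gamma_expansion_unique by fastforce
qed

end
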